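(* Let $n\ge 2$, $\pi\in S_n$ and $1\le i\le n-1$ with $\pi_i<\pi_{i+1}$, and let $\tau\in S_n$ be obtained from $\pi$ by exchanging the entries in positions $i$ and $i+1$. Let $\lambda=\lambda(\pi)$ and $\mu=\lambda(\tau)$, with parts $\lambda_1\ge\lambda_2\ge\cdots$ and $\mu_1\ge\mu_2\ge\cdots$ (set $\lambda_m=0$, $\mu_m=0$ for $m$ beyond the number of parts). Then for every $1\le j\le n$, \[\sum_{m=1}^j \mu_m\le \sum_{m=1}^j\lambda_m\le \sum_{m=1}^j\mu_m+1.\]
   Context: Permutations $\pi\in S_n$ are written in one-line notation $\pi=\pi_1\pi_2\cdots\pi_n$. For $\pi\in S_n$, $\lambda(\pi)$ denotes the shape (a partition of $n$) of the pair of standard Young tableaux associated with $\pi$ by the Robinson–Schensted–Knuth (RSK) correspondence. *)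

theory Defs
  imports Main
begin

text \<open>Permutations of {1..n} in one-line notation are lists. Tableaux are lists of rows
(each row an increasing list).\<close>

fun row_ins :: "nat \<Rightarrow> nat list \<Rightarrow> nat option \<times> nat list" where
  "row_ins x [] = (None, [x])"
| "row_ins x (y # ys) =
     (if x < y then (Some y, x # ys)
      else (let (b, ys') = row_ins x ys in (b, y # ys')))"

fun tab_ins :: "nat \<Rightarrow> nat list list \<Rightarrow> nat list list" where
  "tab_ins x [] = [[x]]"
| "tab_ins x (r # rs) =
     (case row_ins x r of
        (None, r') \<Rightarrow> r' # rs
      | (Some y, r') \<Rightarrow> r' # tab_ins y rs)"

definition rsk_P :: "nat list \<Rightarrow> nat list list" where
  "rsk_P w = foldl (\<lambda>T x. tab_ins x T) [] w"

definition rsk_shape :: "nat list \<Rightarrow> nat list" where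
  "rsk_shape w = map length (rsk_P w)"

definition part :: "nat list \<Rightarrow> nat \<Rightarrow> nat" where
  "part lam m = (if 1 \<le> m \<and> m \<le> length lam then lam ! (m - 1) else 0)"

definition is_perm :: "nat \<Rightarrow> nat list \<Rightarrow> bool" where
  "is_perm n w \<longleftrightarrow> length w = n \<and> distinct w \<and> set w = {1..n}"

end

theory Submission
  imports Defs "HOL-Library.Multiset" "HOL-Combinatorics.Transposition"
begin

text \<open>Greene's theorem: for a word \<open>w\<close> with distinct letters, the first \<open>k\<close> parts of the RSK shape
  sum to the largest number of letters of \<open>w\<close> covered by \<open>k\<close> increasing subsequences. This number
  is invariant under Knuth moves; \<open>w\<close> is Knuth equivalent to the reading word of its insertion
  tableau; and for a reading word the rows give \<open>k\<close> increasing subsequences of the right size,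
  while an increasing subsequence meets each column at most once.

  Turning an ascent into a descent can only break increasing subsequences, and deleting the first
  letter of the ascent from \<open>k\<close> increasing subsequences of \<open>\<pi>\<close> leaves \<open>k\<close> increasing
  subsequences of \<open>\<tau>\<close>; so the partial sums change by at most one.\<close>

hide_const (open) Multiset.part

text \<open>Colour \<open>0\<close> marks uncovered letters; each other colour class must be an increasing subsequence.\<close>

definition chain_colouring :: "nat \<Rightarrow> nat list \<Rightarrow> (nat \<Rightarrow> nat) \<Rightarrow> bool" where
  "chain_colouring k w f \<longleftrightarrow>
     (\<forall>v\<in>set w. f v \<le> k) \<and> (\<forall>c>0. sorted_wrt (<) (filter (\<lambda>v. f v = c) w))"

definition covered :: "nat list \<Rightarrow> (nat \<Rightarrow> nat) \<Rightarrow> nat set" where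
  "covered w f = {v \<in> set w. f v \<noteq> 0}"

definition greene :: "nat \<Rightarrow> nat list \<Rightarrow> nat" where
  "greene k w = Max ((\<lambda>f. card (covered w f)) ` Collect (chain_colouring k w))"

lemma chain_colouring_zero: "chain_colouring k w (\<lambda>_. 0)"
  by (simp add: chain_colouring_def)

lemma chain_colouring_chain:
  "chain_colouring k w f \<Longrightarrow> 0 < c \<Longrightarrow> sorted_wrt (<) (filter (\<lambda>v. f v = c) w)"
  by (simp add: chain_colouring_def)

lemma finite_covered [simp]: "finite (covered w f)"
  by (simp add: covered_def)

lemma card_covered_le_length: "card (covered w f) \<le> length w"
proof -
  have "card (covered w f) \<le> card (set w)" by (rule card_mono) (auto simp: covered_def)
  also have "\<dots> \<le> length w" by (rule card_length)
  finally show ?thesis .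
qed

lemma finite_greene_candidates: "finite ((\<lambda>f. card (covered w f)) ` Collect (chain_colouring k w))"
  by (rule finite_subset[of _ "{..length w}"]) (auto simp: card_covered_le_length)

lemma card_covered_le_greene: "chain_colouring k w f \<Longrightarrow> card (covered w f) \<le> greene k w"
  unfolding greene_def by (rule Max_ge[OF finite_greene_candidates]) simp

lemma greene_attained:
  obtains f where "chain_colouring k w f" "greene k w = card (covered w f)"
proof -
  have "greene k w \<in> (\<lambda>f. card (covered w f)) ` Collect (chain_colouring k w)"
    unfolding greene_def using chain_colouring_zero
    by (intro Max_in[OF finite_greene_candidates]) auto
  with that show ?thesis by blast
qed

lemma greene_leI:
  assumes "\<And>f. chain_colouring k w f \<Longrightarrow>
             \<exists>g. chain_colouring k w' g \<and> card (covered w f) \<le> card (covered w' g)"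
  shows "greene k w \<le> greene k w'"
proof -
  obtain f where f: "chain_colouring k w f" "greene k w = card (covered w f)"
    by (rule greene_attained)
  with assms obtain g where "chain_colouring k w' g" "card (covered w f) \<le> card (covered w' g)"
    by blast
  with f show ?thesis using card_covered_le_greene[of k w' g] by linarith
qed

lemma sorted_filter_append_less:
  assumes "sorted_wrt (<) (filter P (xs @ ys))" "a \<in> set xs" "b \<in> set ys" "P a" "P b"
  shows "a < b"
  using assms by (auto simp: sorted_wrt_append)

lemma chain_colouring_swap:
  assumes "chain_colouring k (p @ [a, b] @ s) f" "\<not> (f a = f b \<and> f a \<noteq> 0)"
  shows "chain_colouring k (p @ [b, a] @ s) f"
proof -
  have "filter (\<lambda>v. f v = c) (p @ [b, a] @ s) = filter (\<lambda>v. f v = c) (p @ [a, b] @ s)"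
    if "0 < c" for c
    using assms(2) that by (cases "f a = c"; cases "f b = c") auto
  with assms(1) show ?thesis by (simp add: chain_colouring_def)
qed

lemma covered_swap: "covered (p @ [b, a] @ s) f = covered (p @ [a, b] @ s) f"
  unfolding covered_def by auto

lemma greene_swap_le:
  assumes "a < b"
  shows "greene k (p @ [b, a] @ s) \<le> greene k (p @ [a, b] @ s)"
proof (rule greene_leI)
  fix f assume f: "chain_colouring k (p @ [b, a] @ s) f"
  have "\<not> (f b = f a \<and> f b \<noteq> 0)"
  proof
    assume "f b = f a \<and> f b \<noteq> 0"
    then have "b < a"
      using chain_colouring_chain[OF f, of "f b"] by (auto simp: sorted_wrt_append)
    with assms show False by simp
  qed
  then have "chain_colouring k (p @ [a, b] @ s) f"
    using chain_colouring_swap[OF f] by auto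
  then show "\<exists>g. chain_colouring k (p @ [a, b] @ s) g \<and>
                 card (covered (p @ [b, a] @ s) f) \<le> card (covered (p @ [a, b] @ s) g)"
    using covered_swap[of p b a s f] by auto
qed

lemma greene_le_swap_Suc:
  "greene k (p @ [a, b] @ s) \<le> Suc (greene k (p @ [b, a] @ s))"
proof -
  let ?w = "p @ [a, b] @ s"
  obtain f where f: "chain_colouring k ?w f" "greene k ?w = card (covered ?w f)"
    by (rule greene_attained)
  define g where "g = f(a := 0)"
  have "chain_colouring k ?w g"
  proof -
    have "sorted_wrt (<) (filter (\<lambda>v. g v = c) ?w)" if "0 < c" for c
    proof -
      have "filter (\<lambda>v. g v = c) ?w = filter (\<lambda>v. v \<noteq> a) (filter (\<lambda>v. f v = c) ?w)"
        unfolding filter_filter using that by (intro filter_cong) (auto simp: g_def)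
      then show ?thesis using sorted_wrt_filter[OF chain_colouring_chain[OF f(1) that]] by (simp only:)
    qed
    moreover have "\<forall>v\<in>set ?w. g v \<le> k" using f(1) by (simp add: chain_colouring_def g_def)
    ultimately show ?thesis by (simp add: chain_colouring_def)
  qed
  then have "chain_colouring k (p @ [b, a] @ s) g"
    by (rule chain_colouring_swap) (simp add: g_def)
  from card_covered_le_greene[OF this]
  have "card (covered ?w g) \<le> greene k (p @ [b, a] @ s)"
    unfolding covered_swap[of p b a s g] .
  moreover have "card (covered ?w f) \<le> card (insert a (covered ?w g))"
    by (rule card_mono) (auto simp: covered_def g_def)
  then have "card (covered ?w f) \<le> Suc (card (covered ?w g))"
    by (simp add: card_insert_if split: if_splits)
  ultimately show ?thesis using f(2) by linarith
qed

text \<open>Two chains that cross a cut in compatible order may swap their tails behind the cut.\<close>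

lemma chain_colouring_exchange:
  assumes f: "chain_colouring k (u @ v) f" and disj: "set u \<inter> set v = {}"
    and c: "0 < c" "c \<le> k" and d: "0 < d" "d \<le> k"
    and cd: "\<forall>a\<in>set u. \<forall>b\<in>set v. f a = c \<longrightarrow> f b = d \<longrightarrow> a < b"
    and dc: "\<forall>a\<in>set u. \<forall>b\<in>set v. f a = d \<longrightarrow> f b = c \<longrightarrow> a < b"
  obtains g where "chain_colouring k (u @ v) g" "covered (u @ v) g = covered (u @ v) f"
    "\<forall>a\<in>set u. g a = f a" "\<forall>b\<in>set v. g b = transpose c d (f b)"
proof -
  define g where "g x = (if x \<in> set v then transpose c d (f x) else f x)" for x
  have filt: "filter (\<lambda>x. g x = e) (u @ v) =
      filter (\<lambda>x. f x = e) u @ filter (\<lambda>x. f x = transpose c d e) v" for e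
  proof -
    have "filter (\<lambda>x. g x = e) u = filter (\<lambda>x. f x = e) u"
      using disj by (intro filter_cong) (auto simp: g_def)
    moreover have "filter (\<lambda>x. g x = e) v = filter (\<lambda>x. f x = transpose c d e) v"
      by (intro filter_cong) (auto simp: g_def transpose_def)
    ultimately show ?thesis by simp
  qed
  have sorted_pieces: "sorted_wrt (<) (filter (\<lambda>x. f x = e) u)"
      "sorted_wrt (<) (filter (\<lambda>x. f x = e) v)" if "0 < e" for e
    using chain_colouring_chain[OF f that] by (simp_all add: sorted_wrt_append)
  have "chain_colouring k (u @ v) g"
    unfolding chain_colouring_def
  proof (intro conjI allI impI ballI)
    show "g x \<le> k" if "x \<in> set (u @ v)" for x
      using f that c d by (auto simp: chain_colouring_def g_def transpose_def)
  next
    fix e :: nat assume e: "0 < e"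
    then have e': "0 < transpose c d e" using c d by (simp add: transpose_def)
    have "\<forall>a\<in>set (filter (\<lambda>x. f x = e) u). \<forall>b\<in>set (filter (\<lambda>x. f x = transpose c d e) v). a < b"
    proof (cases "e = c \<or> e = d")
      case True
      then show ?thesis using cd dc by (auto simp: transpose_def)
    next
      case False
      then show ?thesis
        using sorted_filter_append_less[OF chain_colouring_chain[OF f e]]
        by (auto simp: transpose_def)
    qed
    then show "sorted_wrt (<) (filter (\<lambda>x. g x = e) (u @ v))"
      unfolding filt sorted_wrt_append using sorted_pieces e e' by blast
  qed
  moreover have "covered (u @ v) g = covered (u @ v) f"
    using c d by (auto simp: covered_def g_def transpose_def)
  ultimately show ?thesis
    by (intro that[of g]) (use disj in \<open>auto simp: g_def\<close>)
qed

lemma chain_colouring_replace: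
  assumes f: "chain_colouring k w f" and a: "a \<in> set w" "f a \<noteq> 0" and b: "b \<in> set w" "f b = 0"
    and new_chain: "sorted_wrt (<) (filter (\<lambda>v. v \<noteq> a \<and> (f v = f a \<or> v = b)) w)"
  obtains g where "chain_colouring k w g" "card (covered w g) = card (covered w f)" "g a = 0"
proof -
  define g where "g = f(b := f a, a := 0)"
  have "sorted_wrt (<) (filter (\<lambda>v. g v = e) w)" if "0 < e" for e
  proof (cases "e = f a")
    case True
    have "filter (\<lambda>v. g v = e) w = filter (\<lambda>v. v \<noteq> a \<and> (f v = f a \<or> v = b)) w"
      using True a b by (intro filter_cong) (auto simp: g_def)
    with new_chain show ?thesis by simp
  next
    case False
    have "filter (\<lambda>v. g v = e) w = filter (\<lambda>v. v \<noteq> a) (filter (\<lambda>v. f v = e) w)"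
      unfolding filter_filter using False b that by (intro filter_cong) (auto simp: g_def)
    then show ?thesis using sorted_wrt_filter[OF chain_colouring_chain[OF f that]] by (simp only:)
  qed
  moreover have "\<forall>v\<in>set w. g v \<le> k" using f a by (auto simp: chain_colouring_def g_def)
  ultimately have "chain_colouring k w g" by (simp add: chain_colouring_def)
  moreover have "covered w g = insert b (covered w f - {a})"
    using a b by (auto simp: covered_def g_def)
  moreover have "a \<in> covered w f" "b \<notin> covered w f" using a b by (auto simp: covered_def)
  ultimately show ?thesis
    using that card_Suc_Diff1[OF finite_covered] by (simp add: card_insert_disjoint g_def)
qed

lemma chain_colouring_order:
  assumes "chain_colouring k (xs @ a # ys) f" "f a \<noteq> 0"
  shows "\<forall>b\<in>set xs. f b = f a \<longrightarrow> b < a" and "\<forall>b\<in>set ys. f b = f a \<longrightarrow> a < b"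
  using chain_colouring_chain[OF assms(1), of "f a"] assms(2) by (auto simp: sorted_wrt_append)

text \<open>Before a Knuth move exchanges \<open>x\<close> and \<open>z\<close>, any family of chains can be rearranged,
  without losing letters, so that \<open>x\<close> and \<open>z\<close> lie in different chains: if \<open>y\<close> is uncovered
  it takes the place of \<open>x\<close> (resp. \<open>z\<close>) in their chain, otherwise the chains of \<open>x\<close> and \<open>y\<close>
  exchange their tails.\<close>

lemma chain_colouring_separate_yxz:
  assumes xyz: "x < y" "y < z" and dist: "distinct (p @ [y, x, z] @ s)"
    and f: "chain_colouring k (p @ [y, x, z] @ s) f"
  obtains g where "chain_colouring k (p @ [y, x, z] @ s) g"
    "card (covered (p @ [y, x, z] @ s) g) = card (covered (p @ [y, x, z] @ s) f)"
    "\<not> (g x = g z \<and> g x \<noteq> 0)"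
proof (cases "f x = f z \<and> f x \<noteq> 0")
  case True
  let ?w = "p @ [y, x, z] @ s"
  define c where "c = f x"
  have c: "f x = c" "f z = c" "0 < c" "c \<le> k"
    using True f by (auto simp: c_def chain_colouring_def)
  have "chain_colouring k ((p @ [y]) @ x # z # s) f" "chain_colouring k ((p @ [y, x]) @ z # s) f"
    using f by simp_all
  from chain_colouring_order[OF this(1)] chain_colouring_order[OF this(2)]
  have before_x: "\<forall>a\<in>set p. f a = c \<longrightarrow> a < x" and after_z: "\<forall>b\<in>set s. f b = c \<longrightarrow> z < b"
    using c by auto
  show ?thesis
  proof (cases "f y = 0")
    case True
    have "filter (\<lambda>v. v \<noteq> x \<and> (f v = f x \<or> v = y)) p = filter (\<lambda>v. f v = c) p"
      "filter (\<lambda>v. v \<noteq> x \<and> (f v = f x \<or> v = y)) s = filter (\<lambda>v. f v = c) s"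
      using dist c by (auto intro!: filter_cong)
    then have "filter (\<lambda>v. v \<noteq> x \<and> (f v = f x \<or> v = y)) ?w =
        filter (\<lambda>v. f v = c) p @ [y, z] @ filter (\<lambda>v. f v = c) s"
      using c xyz by simp
    moreover have "sorted_wrt (<) (filter (\<lambda>v. f v = c) p @ [x, z] @ filter (\<lambda>v. f v = c) s)"
      using chain_colouring_chain[OF f c(3)] c True by simp
    ultimately have new_chain: "sorted_wrt (<) (filter (\<lambda>v. v \<noteq> x \<and> (f v = f x \<or> v = y)) ?w)"
      using before_x xyz by (auto simp: sorted_wrt_append)
    have "x \<in> set ?w" "f x \<noteq> 0" "y \<in> set ?w" using c by auto
    from chain_colouring_replace[OF f this True new_chain]
    obtain g where g: "chain_colouring k ?w g" "card (covered ?w g) = card (covered ?w f)" "g x = 0"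
      by blast
    show ?thesis by (rule that[OF g(1,2)]) (use g(3) in auto)
  next
    case False
    define d where "d = f y"
    have "chain_colouring k (p @ y # x # z # s) f" using f by simp
    from chain_colouring_order[OF this False]
    have before_y: "\<forall>a\<in>set p. f a = d \<longrightarrow> a < y"
      and after_y: "\<forall>b\<in>set (x # z # s). f b = d \<longrightarrow> y < b"
      by (simp_all add: d_def)
    have d: "0 < d" "d \<le> k" "d \<noteq> c"
      using False f c(1) after_y xyz by (auto simp: d_def chain_colouring_def)
    have cd: "\<forall>a\<in>set (p @ [y, x]). \<forall>b\<in>set (z # s). f a = c \<longrightarrow> f b = d \<longrightarrow> a < b"
    proof (intro ballI impI)
      fix a b assume "a \<in> set (p @ [y, x])" "b \<in> set (z # s)" "f a = c" "f b = d"
      with before_x after_y c d have "a \<le> x" "y < b" by (auto simp: d_def)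
      with xyz show "a < b" by simp
    qed
    have dc: "\<forall>a\<in>set (p @ [y, x]). \<forall>b\<in>set (z # s). f a = d \<longrightarrow> f b = c \<longrightarrow> a < b"
      using before_y after_z c xyz by (fastforce simp: d_def)
    have "chain_colouring k ((p @ [y, x]) @ z # s) f" "set (p @ [y, x]) \<inter> set (z # s) = {}"
      using f dist by auto
    from chain_colouring_exchange[OF this c(3,4) d(1,2) cd dc]
    obtain g where g: "chain_colouring k ?w g" "covered ?w g = covered ?w f"
        "\<forall>a\<in>set (p @ [y, x]). g a = f a" "\<forall>b\<in>set (z # s). g b = transpose c d (f b)"
      by auto
    from g(3,4) c have gxz: "g x = c" "g z = d" by simp_all
    show ?thesis by (rule that[OF g(1)]) (use g(2) gxz d(3) in simp_all)
  qed
qed (use f in blast)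

lemma chain_colouring_separate_xzy:
  assumes xyz: "x < y" "y < z" and dist: "distinct (p @ [x, z, y] @ s)"
    and f: "chain_colouring k (p @ [x, z, y] @ s) f"
  obtains g where "chain_colouring k (p @ [x, z, y] @ s) g"
    "card (covered (p @ [x, z, y] @ s) g) = card (covered (p @ [x, z, y] @ s) f)"
    "\<not> (g x = g z \<and> g x \<noteq> 0)"
proof (cases "f x = f z \<and> f x \<noteq> 0")
  case True
  let ?w = "p @ [x, z, y] @ s"
  define c where "c = f x"
  have c: "f x = c" "f z = c" "0 < c" "c \<le> k"
    using True f by (auto simp: c_def chain_colouring_def)
  have "chain_colouring k (p @ x # z # y # s) f" "chain_colouring k ((p @ [x]) @ z # y # s) f"
    using f by simp_all
  from chain_colouring_order[OF this(1)] chain_colouring_order[OF this(2)]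
  have before_x: "\<forall>a\<in>set p. f a = c \<longrightarrow> a < x" and after_z: "\<forall>b\<in>set s. f b = c \<longrightarrow> z < b"
    using c by auto
  show ?thesis
  proof (cases "f y = 0")
    case True
    have "filter (\<lambda>v. v \<noteq> z \<and> (f v = f z \<or> v = y)) p = filter (\<lambda>v. f v = c) p"
      "filter (\<lambda>v. v \<noteq> z \<and> (f v = f z \<or> v = y)) s = filter (\<lambda>v. f v = c) s"
      using dist c by (auto intro!: filter_cong)
    then have "filter (\<lambda>v. v \<noteq> z \<and> (f v = f z \<or> v = y)) ?w =
        filter (\<lambda>v. f v = c) p @ [x, y] @ filter (\<lambda>v. f v = c) s"
      using c xyz by simp
    moreover have "sorted_wrt (<) (filter (\<lambda>v. f v = c) p @ [x, z] @ filter (\<lambda>v. f v = c) s)"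
      using chain_colouring_chain[OF f c(3)] c True by simp
    ultimately have new_chain: "sorted_wrt (<) (filter (\<lambda>v. v \<noteq> z \<and> (f v = f z \<or> v = y)) ?w)"
      using after_z xyz by (auto simp: sorted_wrt_append)
    have "z \<in> set ?w" "f z \<noteq> 0" "y \<in> set ?w" using c by auto
    from chain_colouring_replace[OF f this True new_chain]
    obtain g where g: "chain_colouring k ?w g" "card (covered ?w g) = card (covered ?w f)" "g z = 0"
      by blast
    show ?thesis by (rule that[OF g(1,2)]) (use g(3) in auto)
  next
    case False
    define d where "d = f y"
    have "chain_colouring k ((p @ [x, z]) @ y # s) f" using f by simp
    from chain_colouring_order[OF this False]
    have before_y: "\<forall>a\<in>set (p @ [x, z]). f a = d \<longrightarrow> a < y"
      and after_y: "\<forall>b\<in>set s. f b = d \<longrightarrow> y < b"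
      by (simp_all add: d_def)
    have d: "0 < d" "d \<le> k" "d \<noteq> c"
      using False f c(2) before_y xyz by (auto simp: d_def chain_colouring_def)
    have cd: "\<forall>a\<in>set (p @ [x]). \<forall>b\<in>set (z # y # s). f a = c \<longrightarrow> f b = d \<longrightarrow> a < b"
      using before_x after_y c d xyz by (fastforce simp: d_def)
    have dc: "\<forall>a\<in>set (p @ [x]). \<forall>b\<in>set (z # y # s). f a = d \<longrightarrow> f b = c \<longrightarrow> a < b"
      using before_y after_z c d xyz by (fastforce simp: d_def)
    have "chain_colouring k ((p @ [x]) @ z # y # s) f" "set (p @ [x]) \<inter> set (z # y # s) = {}"
      using f dist by auto
    from chain_colouring_exchange[OF this c(3,4) d(1,2) cd dc]
    obtain g where g: "chain_colouring k ?w g" "covered ?w g = covered ?w f"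
        "\<forall>a\<in>set (p @ [x]). g a = f a" "\<forall>b\<in>set (z # y # s). g b = transpose c d (f b)"
      by auto
    from g(3,4) c have gxz: "g x = c" "g z = d" by simp_all
    show ?thesis by (rule that[OF g(1)]) (use g(2) gxz d(3) in simp_all)
  qed
qed (use f in blast)

text \<open>Only the directions of the elementary Knuth relations that occur in row insertion.\<close>

inductive knuth_move :: "nat list \<Rightarrow> nat list \<Rightarrow> bool" where
  knuth_move_yzx: "x < y \<Longrightarrow> y < z \<Longrightarrow> knuth_move (p @ [y, z, x] @ s) (p @ [y, x, z] @ s)"
| knuth_move_xzy: "x < y \<Longrightarrow> y < z \<Longrightarrow> knuth_move (p @ [x, z, y] @ s) (p @ [z, x, y] @ s)"

lemma knuth_move_mset: "knuth_move w w' \<Longrightarrow> mset w' = mset w"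
  by (induction rule: knuth_move.induct) auto

lemma knuth_move_append: "knuth_move w w' \<Longrightarrow> knuth_move (a @ w @ b) (a @ w' @ b)"
proof (induction rule: knuth_move.induct)
  case (knuth_move_yzx x y z p s)
  then show ?case using knuth_move.knuth_move_yzx[of x y z "a @ p" "s @ b"] by simp
next
  case (knuth_move_xzy x y z p s)
  then show ?case using knuth_move.knuth_move_xzy[of x y z "a @ p" "s @ b"] by simp
qed

lemma greene_le_swap_if_separable:
  assumes w: "w = p @ [a, b] @ s"
    and separable: "\<And>f. chain_colouring k w f \<Longrightarrow> \<exists>g. chain_colouring k w g \<and>
      card (covered w g) = card (covered w f) \<and> \<not> (g a = g b \<and> g a \<noteq> 0)"
  shows "greene k w \<le> greene k (p @ [b, a] @ s)"
proof (rule greene_leI)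
  fix f assume "chain_colouring k w f"
  with separable obtain g where g: "chain_colouring k w g" "card (covered w g) = card (covered w f)"
    "\<not> (g a = g b \<and> g a \<noteq> 0)"
    by blast
  from chain_colouring_swap[OF g(1)[unfolded w] g(3)] g(2)
  show "\<exists>g. chain_colouring k (p @ [b, a] @ s) g \<and> card (covered w f) \<le> card (covered (p @ [b, a] @ s) g)"
    unfolding w by (intro exI[of _ g]) (simp only: covered_swap[of p b a s g] order_refl)
qed

lemma greene_knuth_move:
  assumes "knuth_move w w'" "distinct w"
  shows "greene k w = greene k w'"
  using assms
proof (induction rule: knuth_move.induct)
  case (knuth_move_yzx x y z p s)
  have "distinct (p @ [y, x, z] @ s)" using knuth_move_yzx(3) by auto
  from chain_colouring_separate_yxz[OF knuth_move_yzx(1,2) this]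
  have "greene k (p @ [y, x, z] @ s) \<le> greene k ((p @ [y]) @ [z, x] @ s)"
    by (intro greene_le_swap_if_separable) (simp, blast)
  moreover have "greene k ((p @ [y]) @ [z, x] @ s) \<le> greene k ((p @ [y]) @ [x, z] @ s)"
    using knuth_move_yzx by (intro greene_swap_le) simp
  ultimately show ?case by simp
next
  case (knuth_move_xzy x y z p s)
  from chain_colouring_separate_xzy[OF knuth_move_xzy]
  have "greene k (p @ [x, z, y] @ s) \<le> greene k (p @ [z, x] @ y # s)"
    by (intro greene_le_swap_if_separable) (simp, blast)
  moreover have "greene k (p @ [z, x] @ y # s) \<le> greene k (p @ [x, z] @ y # s)"
    using knuth_move_xzy by (intro greene_swap_le) simp
  ultimately show ?case by simp
qed

lemma mset_knuth_equiv: "knuth_move\<^sup>*\<^sup>* w w' \<Longrightarrow> mset w' = mset w"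
  by (induction rule: rtranclp_induct) (auto dest: knuth_move_mset)

lemma greene_knuth_equiv:
  assumes "knuth_move\<^sup>*\<^sup>* w w'" "distinct w"
  shows "greene k w = greene k w'"
  using assms
proof (induction rule: rtranclp_induct)
  case (step w' w'')
  then have "distinct w'" using mset_knuth_equiv mset_eq_imp_distinct_iff by metis
  with step show ?case using greene_knuth_move by simp
qed simp

lemma row_ins_cases:
  assumes "x \<notin> set r"
  obtains (append) "row_ins x r = (None, r @ [x])" "\<forall>e\<in>set r. e < x"
  | (bump) u b v where "r = u @ b # v" "row_ins x r = (Some b, u @ x # v)"
      "\<forall>e\<in>set u. e < x" "x < b"
proof -
  have "(row_ins x r = (None, r @ [x]) \<and> (\<forall>e\<in>set r. e < x)) \<or>
    (\<exists>u b v. r = u @ b # v \<and> row_ins x r = (Some b, u @ x # v) \<and> (\<forall>e\<in>set u. e < x) \<and> x < b)"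
    using assms
  proof (induction r)
    case (Cons y ys)
    show ?case
    proof (cases "x < y")
      case True
      then show ?thesis by (intro disjI2 exI[of _ "[]"]) auto
    next
      case False
      with Cons.prems have "y < x" by auto
      from Cons.prems have "x \<notin> set ys" by simp
      from Cons.IH[OF this] show ?thesis
      proof (elim disjE exE conjE)
        fix u b v assume "ys = u @ b # v" "row_ins x ys = (Some b, u @ x # v)"
          "\<forall>e\<in>set u. e < x" "x < b"
        with False \<open>y < x\<close> show ?thesis by (intro disjI2 exI[of _ "y # u"]) auto
      qed (use False \<open>y < x\<close> in auto)
    qed
  qed simp
  with that show ?thesis by blast
qed

definition reading :: "nat list list \<Rightarrow> nat list" where
  "reading T = concat (rev T)"

lemma reading_Nil [simp]: "reading [] = []"
  and reading_Cons [simp]: "reading (r # T) = reading T @ r"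
  by (simp_all add: reading_def)

lemma knuth_equiv_append:
  "knuth_move\<^sup>*\<^sup>* w w' \<Longrightarrow> knuth_move\<^sup>*\<^sup>* (a @ w @ b) (a @ w' @ b)"
  by (induction rule: rtranclp_induct) (auto intro: rtranclp.rtrancl_into_rtrancl knuth_move_append)

text \<open>Row bumping as a sequence of Knuth moves: the inserted letter travels left past the larger
  letters of the row, then the bumped letter travels left past the smaller ones.\<close>

lemma knuth_equiv_pass_larger:
  assumes "x < b" "sorted_wrt (<) v" "\<forall>e\<in>set v. b < e"
  shows "knuth_move\<^sup>*\<^sup>* (b # v @ [x]) (b # x # v)"
  using assms(2,3)
proof (induction v rule: rev_induct)
  case (snoc e v)
  obtain q l where q: "b # v = q @ [l]" by (metis rev_exhaust list.distinct(1))
  then have "l \<in> set (b # v)" by simp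
  with snoc.prems assms(1) have "x < l" "l < e" by (auto simp: sorted_wrt_append)
  then have "knuth_move (q @ [l, e, x] @ []) (q @ [l, x, e] @ [])"
    by (rule knuth_move_yzx)
  then have "knuth_move (b # (v @ [e]) @ [x]) ((b # v @ [x]) @ [e])"
    using q by (metis append.assoc append_Cons append_Nil self_append_conv)
  moreover have "knuth_move\<^sup>*\<^sup>* ([] @ (b # v @ [x]) @ [e]) ([] @ (b # x # v) @ [e])"
    using snoc by (intro knuth_equiv_append snoc.IH) (auto simp: sorted_wrt_append)
  ultimately show ?case by (simp add: converse_rtranclp_into_rtranclp)
qed simp

lemma knuth_equiv_pass_smaller:
  assumes "sorted_wrt (<) u" "\<forall>e\<in>set u. e < x" "x < b"
  shows "knuth_move\<^sup>*\<^sup>* (u @ [b, x]) (b # u @ [x])"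
  using assms
proof (induction u arbitrary: x rule: rev_induct)
  case (snoc a u)
  then have "a < x" by simp
  then have "knuth_move (u @ [a, b, x] @ []) (u @ [b, a, x] @ [])"
    using snoc.prems(3) by (intro knuth_move_xzy)
  moreover have "knuth_move\<^sup>*\<^sup>* ([] @ (u @ [b, a]) @ [x]) ([] @ (b # u @ [a]) @ [x])"
    using snoc \<open>a < x\<close> by (intro knuth_equiv_append snoc.IH) (auto simp: sorted_wrt_append)
  ultimately show ?case by (simp add: converse_rtranclp_into_rtranclp)
qed simp

lemma knuth_equiv_reading_tab_ins:
  assumes "\<forall>r\<in>set T. sorted_wrt (<) r" "distinct (concat T)" "x \<notin> set (concat T)"
  shows "knuth_move\<^sup>*\<^sup>* (reading T @ [x]) (reading (tab_ins x T))"
  using assms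
proof (induction T arbitrary: x)
  case (Cons r T)
  have "x \<notin> set r" using Cons.prems by simp
  then show ?case
  proof (cases rule: row_ins_cases)
    case append
    then show ?thesis by simp
  next
    case (bump u b v)
    have "sorted_wrt (<) u" "sorted_wrt (<) v" "\<forall>e\<in>set v. b < e"
      using Cons.prems(1) bump(1) by (auto simp: sorted_wrt_append)
    have "knuth_move\<^sup>*\<^sup>* ((reading T @ u) @ (b # v @ [x]) @ []) ((reading T @ u) @ (b # x # v) @ [])"
      using bump \<open>sorted_wrt (<) v\<close> \<open>\<forall>e\<in>set v. b < e\<close>
      by (intro knuth_equiv_append knuth_equiv_pass_larger) auto
    moreover have "knuth_move\<^sup>*\<^sup>* (reading T @ (u @ [b, x]) @ v) (reading T @ (b # u @ [x]) @ v)"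
      using bump \<open>sorted_wrt (<) u\<close> by (intro knuth_equiv_append knuth_equiv_pass_smaller) auto
    moreover have "knuth_move\<^sup>*\<^sup>* ([] @ (reading T @ [b]) @ (u @ x # v))
        ([] @ reading (tab_ins b T) @ (u @ x # v))"
      using Cons.prems bump(1) by (intro knuth_equiv_append Cons.IH) auto
    ultimately show ?thesis
      using bump(1,2) by (auto elim!: rtranclp_trans)
  qed
qed simp

definition fits_below :: "nat list \<Rightarrow> nat list \<Rightarrow> bool" where
  "fits_below r s \<longleftrightarrow> length s \<le> length r \<and> (\<forall>c<length s. r ! c < s ! c)"

definition tableau :: "nat list list \<Rightarrow> bool" where
  "tableau T \<longleftrightarrow> (\<forall>r\<in>set T. sorted_wrt (<) r) \<and> sorted_wrt fits_below T"

lemma transp_fits_below: "transp fits_below"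
proof (rule transpI)
  fix r s t assume "fits_below r s" "fits_below s t"
  then show "fits_below r t"
    unfolding fits_below_def by (meson dual_order.strict_trans le_trans less_le_trans)
qed

lemma tableau_Cons:
  "tableau (r # T) \<longleftrightarrow> sorted_wrt (<) r \<and> (T \<noteq> [] \<longrightarrow> fits_below r (hd T)) \<and> tableau T"
  by (cases T) (auto simp: tableau_def intro: transpD[OF transp_fits_below])

lemma fits_below_snoc: "fits_below r s \<Longrightarrow> fits_below (r @ [x]) s"
  by (auto simp: fits_below_def nth_append)

lemma fits_below_prefix_length:
  assumes fits: "fits_below (u @ b # v) (u' @ t)" and small: "\<forall>e\<in>set u'. e < b"
  shows "length u' \<le> length u"
proof (rule ccontr)
  assume long: "\<not> length u' \<le> length u"
  then have "u' ! length u \<in> set u'" by simp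
  moreover have "length u < length (u' @ t)" using long by simp
  with fits have "(u @ b # v) ! length u < (u' @ t) ! length u"
    unfolding fits_below_def by blast
  ultimately show False using long small by (fastforce simp: nth_append)
qed

text \<open>The letter bumped out of column \<open>c\<close> enters the next row at a column \<open>\<le> c\<close>,
  so columns stay strictly increasing.\<close>

lemma fits_below_bump:
  assumes fits: "fits_below (u @ b # v) s" and u: "\<forall>e\<in>set u. e < x" and "x < b" and "b \<notin> set s"
  shows "fits_below (u @ x # v) (snd (row_ins b s))"
proof -
  let ?r = "u @ b # v" and ?r' = "u @ x # v"
  have r'_le: "?r' ! c \<le> ?r ! c" for c
    using \<open>x < b\<close> by (cases "c < length u") (auto simp: nth_append nth_Cons')
  have r'_less: "?r' ! c < b" if "c \<le> length u" for c
  proof (cases "c < length u")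
    case True
    then have "u ! c < x" using u by (meson nth_mem)
    with True \<open>x < b\<close> show ?thesis by (simp add: nth_append)
  next
    case False
    with that \<open>x < b\<close> show ?thesis by (simp add: nth_append)
  qed
  from \<open>b \<notin> set s\<close> show ?thesis
  proof (cases rule: row_ins_cases)
    case append
    with fits_below_prefix_length[of u b v s "[]"] fits have "length s \<le> length u" by simp
    then show ?thesis
      using append fits r'_le r'_less unfolding fits_below_def
      by (auto simp: nth_append less_Suc_eq intro: le_less_trans)
  next
    case (bump u' b' v')
    with fits_below_prefix_length[of u b v u' "b' # v'"] fits have "length u' \<le> length u" by simp
    show ?thesis unfolding fits_below_def
    proof (intro conjI allI impI)
      show "length (snd (row_ins b s)) \<le> length ?r'" using bump fits by (simp add: fits_below_def)
    next
      fix c assume c: "c < length (snd (row_ins b s))"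
      show "?r' ! c < snd (row_ins b s) ! c"
      proof (cases "c = length u'")
        case True
        with bump \<open>length u' \<le> length u\<close> r'_less show ?thesis by simp
      next
        case False
        then have "snd (row_ins b s) ! c = s ! c" using bump by (simp add: nth_append nth_Cons')
        moreover have "?r ! c < s ! c" using fits c bump by (simp add: fits_below_def)
        ultimately show ?thesis using r'_le[of c] by simp
      qed
    qed
  qed
qed

lemma hd_tab_ins: "hd (tab_ins x T) = snd (row_ins x (case T of [] \<Rightarrow> [] | r # _ \<Rightarrow> r))"
  by (cases T) (auto split: prod.splits option.splits)

lemma tableau_tab_ins:
  assumes "tableau T" "distinct (concat T)" "x \<notin> set (concat T)"
  shows "tableau (tab_ins x T)"
  using assms
proof (induction T arbitrary: x)
  case Nil
  then show ?case by (simp add: tableau_def)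
next
  case (Cons r T)
  have r: "sorted_wrt (<) r" "T \<noteq> [] \<Longrightarrow> fits_below r (hd T)" "tableau T"
    using Cons.prems(1) by (simp_all add: tableau_Cons)
  have "x \<notin> set r" using Cons.prems by simp
  then show ?case
  proof (cases rule: row_ins_cases)
    case append
    then show ?thesis using r by (auto simp: tableau_Cons sorted_wrt_append fits_below_snoc)
  next
    case (bump u b v)
    let ?s = "case T of [] \<Rightarrow> [] | s # _ \<Rightarrow> s"
    have "fits_below r ?s" using r(2) by (cases T) (auto simp: fits_below_def)
    moreover have "b \<notin> set ?s" using Cons.prems(2) bump(1) by (cases T) auto
    ultimately have "fits_below (u @ x # v) (hd (tab_ins b T))"
      unfolding hd_tab_ins using bump by (intro fits_below_bump) auto
    moreover have "tableau (tab_ins b T)"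
      using Cons.IH r(3) Cons.prems(2) bump(1) by auto
    moreover have "sorted_wrt (<) (u @ x # v)"
      using r(1) bump by (auto simp: sorted_wrt_append)
    ultimately show ?thesis using bump by (auto simp: tableau_Cons)
  qed
qed

lemma mset_row_ins:
  "mset (snd (row_ins x r)) + (case fst (row_ins x r) of None \<Rightarrow> {#} | Some b \<Rightarrow> {#b#}) =
     add_mset x (mset r)"
  by (induction x r rule: row_ins.induct) (auto split: prod.splits option.splits)

lemma mset_concat_tab_ins: "mset (concat (tab_ins x T)) = add_mset x (mset (concat T))"
proof (induction x T rule: tab_ins.induct)
  case (2 x r T)
  then show ?case
    using mset_row_ins[of x r] by (auto split: prod.splits option.splits)
qed simp

lemma rsk_P_Nil [simp]: "rsk_P [] = []"
  and rsk_P_snoc [simp]: "rsk_P (w @ [x]) = tab_ins x (rsk_P w)"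
  by (simp_all add: rsk_P_def)

lemma mset_concat_rsk_P: "mset (concat (rsk_P w)) = mset w"
  by (induction w rule: rev_induct) (simp_all add: mset_concat_tab_ins)

lemma distinct_concat_rsk_P: "distinct w \<Longrightarrow> distinct (concat (rsk_P w))"
  using mset_concat_rsk_P mset_eq_imp_distinct_iff by blast

lemma tableau_rsk_P: "distinct w \<Longrightarrow> tableau (rsk_P w)"
proof (induction w rule: rev_induct)
  case (snoc x w)
  then show ?case
    using distinct_concat_rsk_P mset_concat_rsk_P[of w]
    by (auto intro!: tableau_tab_ins dest: mset_eq_setD)
qed (simp add: tableau_def)

lemma knuth_equiv_rsk_P: "distinct w \<Longrightarrow> knuth_move\<^sup>*\<^sup>* w (reading (rsk_P w))"
proof (induction w rule: rev_induct)
  case (snoc x w)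
  then have "knuth_move\<^sup>*\<^sup>* ([] @ w @ [x]) ([] @ reading (rsk_P w) @ [x])"
    by (intro knuth_equiv_append) simp
  moreover have "knuth_move\<^sup>*\<^sup>* (reading (rsk_P w) @ [x]) (reading (rsk_P (w @ [x])))"
    using snoc.prems tableau_rsk_P[of w] distinct_concat_rsk_P[of w] mset_concat_rsk_P[of w]
    by (auto simp: tableau_def intro!: knuth_equiv_reading_tab_ins dest: mset_eq_setD)
  ultimately show ?case by simp
qed simp

lemma rows_chain_colouring:
  assumes "\<forall>r\<in>set T. sorted_wrt (<) r" "distinct (reading T)"
  shows "\<exists>f. chain_colouring k (reading T) f \<and>
    card (covered (reading T) f) = sum_list (take k (map length T))"
  using assms
proof (induction T arbitrary: k)
  case Nil
  then show ?case using chain_colouring_zero by (auto simp: covered_def)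
next
  case (Cons r T)
  show ?case
  proof (cases k)
    case 0
    then show ?thesis using chain_colouring_zero by (auto simp: covered_def)
  next
    case (Suc k')
    have disj: "set (reading T) \<inter> set r = {}" and "distinct r"
      using Cons.prems(2) by auto
    have "\<exists>f'. chain_colouring k' (reading T) f' \<and>
        card (covered (reading T) f') = sum_list (take k' (map length T))"
      using Cons.IH[of k'] Cons.prems by simp
    then obtain f' where f': "chain_colouring k' (reading T) f'"
      "card (covered (reading T) f') = sum_list (take k' (map length T))"
      by blast
    define f where "f v = (if v \<in> set r then k else f' v)" for v
    have "filter (\<lambda>v. f v = e) (reading T @ r) =
        filter (\<lambda>v. f' v = e) (reading T) @ (if e = k then r else [])" for e
    proof -
      have "filter (\<lambda>v. f v = e) (reading T) = filter (\<lambda>v. f' v = e) (reading T)"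
        using disj by (intro filter_cong) (auto simp: f_def)
      moreover have "filter (\<lambda>v. f v = e) r = (if e = k then r else [])"
        by (simp add: f_def)
      ultimately show ?thesis by simp
    qed
    moreover have "filter (\<lambda>v. f' v = k) (reading T) = []"
      using f'(1) Suc by (auto simp: chain_colouring_def filter_empty_conv)
    ultimately have "chain_colouring k (reading T @ r) f"
      using f'(1) Cons.prems(1) Suc by (auto simp: chain_colouring_def f_def)
    moreover have "covered (reading T @ r) f = covered (reading T) f' \<union> set r"
      using disj Suc by (auto simp: covered_def f_def)
    then have "card (covered (reading T @ r) f) = card (covered (reading T) f') + length r"
      using disj \<open>distinct r\<close> by (simp add: card_Un_disjoint covered_def distinct_card disjoint_iff)
    ultimately show ?thesis using f'(2) Suc by (intro exI[of _ f]) simp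
  qed
qed

lemma set_reading: "set (reading T) = (\<Union>r\<in>set T. set r)"
  by (simp add: reading_def)

lemma tableau_fits_below:
  "tableau T \<Longrightarrow> i < j \<Longrightarrow> j < length T \<Longrightarrow> fits_below (T ! i) (T ! j)"
  unfolding tableau_def by (blast intro: sorted_wrt_nth_less)

lemma reading_split:
  assumes "i < j" "j < length T"
  obtains xs ys where "reading T = xs @ ys" "set (T ! j) \<subseteq> set xs" "set (T ! i) \<subseteq> set ys"
proof
  show "reading T = concat (rev (drop j T)) @ concat (rev (take j T))"
    unfolding reading_def by (metis append_take_drop_id concat_append rev_append)
  show "set (T ! j) \<subseteq> set (concat (rev (drop j T)))"
    using assms by (auto simp: Cons_nth_drop_Suc[symmetric])
  show "set (T ! i) \<subseteq> set (concat (rev (take j T)))"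
    using assms by (force simp: in_set_conv_nth)
qed

text \<open>The reading word lists lower rows first, so the entries of a column appear in decreasing
  order and no chain can meet a column twice.\<close>

lemma column_colours_distinct:
  assumes T: "tableau T" and f: "chain_colouring k (reading T) f"
    and ij: "i < j" "j < length T" and c: "c < length (T ! j)"
    and same: "f (T ! i ! c) = f (T ! j ! c)"
  shows "f (T ! i ! c) = 0"
proof (rule ccontr)
  assume nz: "f (T ! i ! c) \<noteq> 0"
  have "c < length (T ! i)" "T ! i ! c < T ! j ! c"
    using tableau_fits_below[OF T ij] c by (auto simp: fits_below_def)
  obtain xs ys where split: "reading T = xs @ ys" and "set (T ! j) \<subseteq> set xs" "set (T ! i) \<subseteq> set ys"
    using reading_split[OF ij] .
  with c \<open>c < length (T ! i)\<close> have j_xs: "T ! j ! c \<in> set xs" and i_ys: "T ! i ! c \<in> set ys"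
    by (meson nth_mem subsetD)+
  have "sorted_wrt (<) (filter (\<lambda>v. f v = f (T ! i ! c)) (xs @ ys))"
    using chain_colouring_chain[OF f] nz unfolding split by blast
  from sorted_filter_append_less[OF this j_xs i_ys] same have "T ! j ! c < T ! i ! c"
    by simp
  with \<open>T ! i ! c < T ! j ! c\<close> show False by simp
qed

lemma sum_card_columns:
  assumes "\<forall>r\<in>set T. length r \<le> L"
  shows "(\<Sum>c<L. card {i. i < k \<and> i < length T \<and> c < length (T ! i)}) = sum_list (take k (map length T))"
proof -
  let ?m = "min k (length T)"
  have "(\<Sum>c<L. card {i. i < k \<and> i < length T \<and> c < length (T ! i)}) =
      (\<Sum>c<L. \<Sum>i<?m. if c < length (T ! i) then 1 else 0)"
  proof (rule sum.cong[OF refl])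
    fix c
    have "{i. i < k \<and> i < length T \<and> c < length (T ! i)} = {i \<in> {..<?m}. c < length (T ! i)}"
      by auto
    then show "card {i. i < k \<and> i < length T \<and> c < length (T ! i)} =
        (\<Sum>i<?m. if c < length (T ! i) then 1 else 0)"
      by (simp add: sum.inter_filter[symmetric])
  qed
  also have "\<dots> = (\<Sum>i<?m. \<Sum>c<L. if c < length (T ! i) then 1 else 0)"
    by (rule sum.swap)
  also have "\<dots> = (\<Sum>i<?m. length (T ! i))"
  proof (rule sum.cong[OF refl])
    fix i assume "i \<in> {..<?m}"
    then have "length (T ! i) \<le> L" using assms by auto
    then have "{c \<in> {..<L}. c < length (T ! i)} = {..<length (T ! i)}" by auto
    then show "(\<Sum>c<L. if c < length (T ! i) then 1 else 0) = length (T ! i)"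
      by (simp add: sum.inter_filter[symmetric])
  qed
  also have "\<dots> = sum_list (take k (map length T))"
    by (simp add: sum_list_sum_nth atLeast0LessThan min.commute)
  finally show ?thesis .
qed

lemma column_chain_count:
  assumes T: "tableau T" and f: "chain_colouring k (reading T) f"
  shows "card {i. i < length T \<and> c < length (T ! i) \<and> f (T ! i ! c) \<noteq> 0}
    \<le> card {i. i < k \<and> i < length T \<and> c < length (T ! i)}"
proof -
  define column where "column = {i. i < length T \<and> c < length (T ! i)}"
  define hit where "hit = {i \<in> column. f (T ! i ! c) \<noteq> 0}"
  have down: "i' \<in> column" if "i \<in> column" "i' < i" for i i'
    using that tableau_fits_below[OF T that(2)] by (auto simp: column_def fits_below_def)
  have "inj_on (\<lambda>i. f (T ! i ! c)) hit"
  proof (rule inj_onI)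
    fix i j assume "i \<in> hit" "j \<in> hit" "f (T ! i ! c) = f (T ! j ! c)"
    then show "i = j"
      using column_colours_distinct[OF T f, of i j c] column_colours_distinct[OF T f, of j i c]
      by (cases i j rule: linorder_cases) (auto simp: hit_def column_def)
  qed
  moreover have "(\<lambda>i. f (T ! i ! c)) ` hit \<subseteq> {1..k}"
  proof
    fix e assume "e \<in> (\<lambda>i. f (T ! i ! c)) ` hit"
    then obtain i where i: "i < length T" "c < length (T ! i)" "e = f (T ! i ! c)" "e \<noteq> 0"
      by (auto simp: hit_def column_def)
    then have "T ! i ! c \<in> set (reading T)"
      unfolding set_reading by (meson UN_I nth_mem)
    with f i show "e \<in> {1..k}" by (simp add: chain_colouring_def)
  qed
  ultimately have bound_k: "card hit \<le> k"
    using card_inj_on_le[of _ hit "{1..k}"] by simp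
  have bound_column: "card hit \<le> card column"
    by (rule card_mono) (auto simp: hit_def column_def)
  have "{i \<in> column. i < k} = column \<or> {i \<in> column. i < k} = {..<k}"
  proof (cases "column \<subseteq> {..<k}")
    case False
    then obtain i where "i \<in> column" "k \<le> i" by (meson lessThan_iff not_le subsetI)
    then have "{..<k} \<subseteq> column" using down by auto
    then show ?thesis by auto
  qed auto
  then have "card hit \<le> card {i \<in> column. i < k}"
    using bound_k bound_column by (elim disjE) simp_all
  moreover have "{i. i < length T \<and> c < length (T ! i) \<and> f (T ! i ! c) \<noteq> 0} = hit"
    "{i. i < k \<and> i < length T \<and> c < length (T ! i)} = {i \<in> column. i < k}"
    by (auto simp: hit_def column_def)
  ultimately show ?thesis by (simp only:)
qed

lemma card_covered_reading_le:
  assumes T: "tableau T" and f: "chain_colouring k (reading T) f"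
  shows "card (covered (reading T) f) \<le> sum_list (take k (map length T))"
proof (cases T)
  case Nil
  then show ?thesis by (simp add: covered_def)
next
  case (Cons r0 T')
  define L where "L = length r0"
  have width: "\<forall>r\<in>set T. length r \<le> L"
    using T by (auto simp: Cons L_def tableau_def fits_below_def)
  define hit where "hit c = {i. i < length T \<and> c < length (T ! i) \<and> f (T ! i ! c) \<noteq> 0}" for c
  have "covered (reading T) f \<subseteq> (\<Union>c<L. (\<lambda>i. T ! i ! c) ` hit c)"
  proof
    fix v assume "v \<in> covered (reading T) f"
    then have "v \<in> set (reading T)" "f v \<noteq> 0" by (simp_all add: covered_def)
    then obtain r where "r \<in> set T" "v \<in> set r" unfolding set_reading by blast
    then obtain i c where "i < length T" "T ! i = r" "c < length r" "r ! c = v"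
      by (metis in_set_conv_nth)
    moreover have "length r \<le> L" using width \<open>r \<in> set T\<close> by simp
    ultimately show "v \<in> (\<Union>c<L. (\<lambda>i. T ! i ! c) ` hit c)"
      using \<open>f v \<noteq> 0\<close> unfolding hit_def by force
  qed
  then have "card (covered (reading T) f) \<le> card (\<Union>c<L. (\<lambda>i. T ! i ! c) ` hit c)"
    by (rule card_mono[rotated]) (simp add: hit_def)
  also have "\<dots> \<le> (\<Sum>c<L. card ((\<lambda>i. T ! i ! c) ` hit c))"
    by (rule card_UN_le) simp
  also have "\<dots> \<le> (\<Sum>c<L. card (hit c))"
    by (rule sum_mono) (rule card_image_le, simp add: hit_def)
  also have "\<dots> \<le> (\<Sum>c<L. card {i. i < k \<and> i < length T \<and> c < length (T ! i)})"
    unfolding hit_def by (rule sum_mono) (rule column_chain_count[OF T f])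
  also have "\<dots> = sum_list (take k (map length T))"
    using sum_card_columns[OF width] .
  finally show ?thesis .
qed

lemma greene_reading_tableau:
  assumes "tableau T" "distinct (reading T)"
  shows "greene k (reading T) = sum_list (take k (map length T))"
proof (rule antisym)
  obtain f where "chain_colouring k (reading T) f" "greene k (reading T) = card (covered (reading T) f)"
    by (rule greene_attained)
  then show "greene k (reading T) \<le> sum_list (take k (map length T))"
    using card_covered_reading_le[OF assms(1)] by simp
  from rows_chain_colouring[of T k] assms obtain g where "chain_colouring k (reading T) g"
    "card (covered (reading T) g) = sum_list (take k (map length T))"
    unfolding tableau_def by blast
  then show "sum_list (take k (map length T)) \<le> greene k (reading T)"
    using card_covered_le_greene by metis
qed

theorem greene_eq_rsk_shape:
  assumes "distinct w"
  shows "greene k w = sum_list (take k (rsk_shape w))"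
proof -
  have equiv: "knuth_move\<^sup>*\<^sup>* w (reading (rsk_P w))" using knuth_equiv_rsk_P[OF assms] .
  then have "distinct (reading (rsk_P w))"
    using assms mset_knuth_equiv mset_eq_imp_distinct_iff by metis
  with equiv show ?thesis
    using greene_knuth_equiv[OF equiv assms] greene_reading_tableau tableau_rsk_P[OF assms]
    by (simp add: rsk_shape_def)
qed

lemma sum_part_eq_sum_list_take: "(\<Sum>m=1..j. part lam m) = sum_list (take j lam)"
proof (induction j)
  case (Suc j)
  have "part lam (Suc j) = (if j < length lam then lam ! j else 0)"
    by (simp add: Defs.part_def)
  with Suc show ?case by (simp add: take_Suc_conv_app_nth)
qed simp

lemma adjacent_swap_split:
  assumes "Suc i < length xs"
  obtains p s where "xs = p @ [xs ! i, xs ! Suc i] @ s"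
    "xs[i := xs ! Suc i, Suc i := xs ! i] = p @ [xs ! Suc i, xs ! i] @ s"
proof
  show xs: "xs = take i xs @ [xs ! i, xs ! Suc i] @ drop (Suc (Suc i)) xs"
    using assms by (simp add: Cons_nth_drop_Suc)
  have "length (take i xs) = i" using assms by simp
  then show "xs[i := xs ! Suc i, Suc i := xs ! i] =
      take i xs @ [xs ! Suc i, xs ! i] @ drop (Suc (Suc i)) xs"
    by (subst xs) (simp add: list_update_append)
qed

theorem proposition3:
  fixes n i :: nat and \<pi> \<tau> :: "nat list"
  assumes "n \<ge> 2"
    and "is_perm n \<pi>"
    and "1 \<le> i" and "i \<le> n - 1"
    and "\<pi> ! (i - 1) < \<pi> ! i"
    and "\<tau> = \<pi>[i - 1 := \<pi> ! i, i := \<pi> ! (i - 1)]"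
  shows "\<forall>j\<in>{1..n}.
           (\<Sum>m=1..j. part (rsk_shape \<tau>) m) \<le> (\<Sum>m=1..j. part (rsk_shape \<pi>) m) \<and>
           (\<Sum>m=1..j. part (rsk_shape \<pi>) m) \<le> (\<Sum>m=1..j. part (rsk_shape \<tau>) m) + 1"
proof
  fix j
  have "distinct \<pi>" "Suc (i - 1) < length \<pi>" "Suc (i - 1) = i"
    using assms(1-4) by (auto simp: is_perm_def)
  then obtain p s where \<pi>: "\<pi> = p @ [\<pi> ! (i - 1), \<pi> ! i] @ s" and \<tau>: "\<tau> = p @ [\<pi> ! i, \<pi> ! (i - 1)] @ s"
    using adjacent_swap_split[of "i - 1" \<pi>] assms(6) by metis
  have "distinct \<tau>" using \<open>distinct \<pi>\<close> by (subst (asm) \<pi>) (auto simp: \<tau>)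
  have "greene j \<tau> \<le> greene j \<pi>" "greene j \<pi> \<le> Suc (greene j \<tau>)"
    using greene_swap_le[OF assms(5)] greene_le_swap_Suc by (subst \<pi>, subst \<tau>, blast)+
  then show "(\<Sum>m=1..j. part (rsk_shape \<tau>) m) \<le> (\<Sum>m=1..j. part (rsk_shape \<pi>) m) \<and>
      (\<Sum>m=1..j. part (rsk_shape \<pi>) m) \<le> (\<Sum>m=1..j. part (rsk_shape \<tau>) m) + 1"
    unfolding sum_part_eq_sum_list_take
    using greene_eq_rsk_shape \<open>distinct \<pi>\<close> \<open>distinct \<tau>\<close> by simp
qed

end
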